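(* Let $H_{\mathcal L,\Theta}$ be a Hamburger Hamiltonian with $N<\infty$ and let $m$ be its Weyl--Titchmarsh function. Let $\kappa$ be the number of $k\in\{1,\dots,N\}$ with $\theta_k\notin\pi\mathbb Z$, and for $j\in\{0,\dots,\kappa\}$ let $k(j)$ be the largest integer $k\in\{0,\dots,N\}$ such that exactly $j$ of $\theta_0,\dots,\theta_{k-1}$ are not in $\pi\mathbb Z$. Define $l_j:=\ell_{k(j)}\sin^2(\theta_{k(j)})$ for $j\in\{0,\dots,\kappa\}$ and, for $j\in\{0,\dots,\kappa-1\}$, $\omega_j:=\cot(\theta_{k(j+1)})-\cot(\theta_{k(j)})$ and $\upsilon_j:=0$ if $k(j+1)-k(j)=1$, $\upsilon_j:=\ell_{k(j)+1}$ if $k(j+1)-k(j)=2$ (these are the only possibilities). Then for all $z\in\mathbb C\setminus\mathbb R$, $$m(z)=\cfrac{1}{-l_0z+\cfrac{1}{\omega_0+\upsilon_0z+\cfrac{1}{\ddots+\cfrac{1}{\omega_{\kappa-1}+\upsilon_{\kappa-1}z+\cfrac{1}{-l_\kappa z}}}}},$$ where $\frac{1}{-l_\kappa z}$ is interpreted as $0$ if $l_\kappa=\infty$.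
   Context: For $\theta\in\mathbb R$ let $H_\theta:=\begin{pmatrix}\cos^2\theta&\cos\theta\sin\theta\\ \cos\theta\sin\theta&\sin^2\theta\end{pmatrix}$. Hamburger Hamiltonian: fix $L\in(0,\infty]$, $N\in\mathbb Z_{\ge0}\cup\{\infty\}$, reals $\{\ell_k\}_{k=0}^{N-1}$ and $\{\theta_k\}_{k=0}^{N}$ with $\theta_0=\pi/2$, $\ell_k>0$ and $\theta_k<\theta_{k+1}<\theta_k+\pi$ for $k\in\{0,\dots,N-1\}$. Set $x_{-1}:=0$, $x_k:=x_{k-1}+\ell_k$. If $N<\infty$, assume $x_{N-1}<x_N:=L$ (and put $\ell_N:=L-x_{N-1}\in(0,\infty]$) and $\theta_N\notin\pi\mathbb Z$; if $N=\infty$, $L:=\sum_{k\ge0}\ell_k$. Then $H_{\mathcal L,\Theta}(x):=\sum_{k=0}^N H_{\theta_k}\mathbb 1_{[x_{k-1},x_k)}(x)$, $x\in[0,L)$. Its Weyl--Titchmarsh function is $m(z):=\lim_{x\to L}U_{11}(z,x)/U_{12}(z,x)$, $z\in\mathbb C\setminus\mathbb R$, where $U(z,\cdot)$ solves $U(z,x)=I-z\int_0^xJH_{\mathcal L,\Theta}(t)U(z,t)\,dt$, $J=\begin{pmatrix}0&1\\-1&0\end{pmatrix}$. *)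

theory Defs
  imports "HOL-Analysis.Analysis"
begin

definition inPiZ :: "real \<Rightarrow> bool" where
  "inPiZ t \<longleftrightarrow> (\<exists>n::int. t = of_int n * pi)"

definition Hth :: "real \<Rightarrow> complex^2^2" where
  "Hth t = (\<chi> i j. complex_of_real ((if i = 1 then cos t else sin t) * (if j = 1 then cos t else sin t)))"

definition Jmat :: "complex^2^2" where
  "Jmat = (\<chi> i j. if i = 1 \<and> j = 2 then 1 else if i = 2 \<and> j = 1 then -1 else 0)"

text \<open>Partition points: xpt ell k = x_{k-1} = sum of ell_i for i < k.\<close>
definition xpt :: "(nat \<Rightarrow> real) \<Rightarrow> nat \<Rightarrow> real" where
  "xpt ell k = (\<Sum>i<k. ell i)"

definition hamH :: "nat \<Rightarrow> (nat \<Rightarrow> real) \<Rightarrow> (nat \<Rightarrow> real) \<Rightarrow> real \<Rightarrow> complex^2^2" where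
  "hamH N ell th x =
     (\<Sum>k<N. (if xpt ell k \<le> x \<and> x < xpt ell (Suc k) then Hth (th k) else 0))
     + (if xpt ell N \<le> x then Hth (th N) else 0)"

definition scaleM :: "complex \<Rightarrow> complex^2^2 \<Rightarrow> complex^2^2" where
  "scaleM c M = (\<chi> i j. c * M $ i $ j)"

definition solves_U :: "nat \<Rightarrow> (nat \<Rightarrow> real) \<Rightarrow> (nat \<Rightarrow> real) \<Rightarrow> ereal \<Rightarrow> complex \<Rightarrow> (real \<Rightarrow> complex^2^2) \<Rightarrow> bool" where
  "solves_U N ell th L z U \<longleftrightarrow>
     (\<forall>x. 0 \<le> x \<and> ereal x < L \<longrightarrow>
        (\<lambda>t. Jmat ** hamH N ell th t ** U t) integrable_on {0..x} \<and>
        U x = mat 1 - scaleM z (integral {0..x} (\<lambda>t. Jmat ** hamH N ell th t ** U t)))"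

definition toL :: "ereal \<Rightarrow> real filter" where
  "toL L = (if L = \<infinity> then at_top else at_left (real_of_ereal L))"

definition cntNZ :: "(nat \<Rightarrow> real) \<Rightarrow> nat \<Rightarrow> nat" where
  "cntNZ th k = card {i. i < k \<and> \<not> inPiZ (th i)}"

definition kappa :: "nat \<Rightarrow> (nat \<Rightarrow> real) \<Rightarrow> nat" where
  "kappa N th = card {k. 1 \<le> k \<and> k \<le> N \<and> \<not> inPiZ (th k)}"

definition kj :: "nat \<Rightarrow> (nat \<Rightarrow> real) \<Rightarrow> nat \<Rightarrow> nat" where
  "kj N th j = (GREATEST k. k \<le> N \<and> cntNZ th k = j)"

definition lj :: "nat \<Rightarrow> (nat \<Rightarrow> real) \<Rightarrow> (nat \<Rightarrow> real) \<Rightarrow> nat \<Rightarrow> real" where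
  "lj N ell th j = ell (kj N th j) * (sin (th (kj N th j)))^2"

definition omegaj :: "nat \<Rightarrow> (nat \<Rightarrow> real) \<Rightarrow> nat \<Rightarrow> real" where
  "omegaj N th j = cot (th (kj N th (Suc j))) - cot (th (kj N th j))"

definition upsj :: "nat \<Rightarrow> (nat \<Rightarrow> real) \<Rightarrow> (nat \<Rightarrow> real) \<Rightarrow> nat \<Rightarrow> real" where
  "upsj N ell th j = (if kj N th (Suc j) - kj N th j = 2 then ell (kj N th j + 1) else 0)"

text \<open>contfrac a b t n = 1/(a0 + 1/(b0 + 1/(a1 + 1/(b1 + ... 1/(b_{n-1} + t))))).\<close>
primrec contfrac :: "(nat \<Rightarrow> complex) \<Rightarrow> (nat \<Rightarrow> complex) \<Rightarrow> complex \<Rightarrow> nat \<Rightarrow> complex" where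
  "contfrac a b t 0 = t"
| "contfrac a b t (Suc n) =
     1 / (a 0 + 1 / (b 0 + contfrac (\<lambda>i. a (Suc i)) (\<lambda>i. b (Suc i)) t n))"

text \<open>The last term 1/(-l_kappa z), with l_kappa = (L - x_{N-1}) sin^2 theta_N, read as 0 if L = infinity.\<close>
definition lastTerm :: "nat \<Rightarrow> (nat \<Rightarrow> real) \<Rightarrow> (nat \<Rightarrow> real) \<Rightarrow> ereal \<Rightarrow> complex \<Rightarrow> complex" where
  "lastTerm N ell th L z = (if L = \<infinity> then 0
     else 1 / (- complex_of_real ((real_of_ereal L - xpt ell N) * (sin (th N))^2) * z))"

definition cfWT :: "nat \<Rightarrow> (nat \<Rightarrow> real) \<Rightarrow> (nat \<Rightarrow> real) \<Rightarrow> ereal \<Rightarrow> complex \<Rightarrow> complex" where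
  "cfWT N ell th L z = contfrac
      (\<lambda>j. - complex_of_real (lj N ell th j) * z)
      (\<lambda>j. complex_of_real (omegaj N th j) + complex_of_real (upsj N ell th j) * z)
      (lastTerm N ell th L z) (kappa N th)"

end

theory Submission
  imports Defs "HOL-Real_Asymp.Real_Asymp"
begin

text \<open>
  On each segment the Hamiltonian is a constant matrix \<open>H\<^sub>\<theta>\<close> with \<open>(J H\<^sub>\<theta>)\<^sup>2 = 0\<close>, so the
  fundamental solution is a product of affine transfer matrices \<open>I - z l J H\<^sub>\<theta>\<close>.
  Conjugating by lower shears built from \<open>cot \<theta>\<close>, the transfer matrix of a segment with
  \<open>sin \<theta> \<noteq> 0\<close> splits as a lower shear by \<open>-cot \<theta>\<close>, an upper shear by \<open>-z l sin\<^sup>2\<theta>\<close> and a lower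
  shear by \<open>cot \<theta>\<close>, while a segment with \<open>sin \<theta> = 0\<close> is itself a lower shear by \<open>z l\<close>.
  Hence the first row of \<open>U(x)\<close> is a fixed product of alternating shears applied to a row
  vector that depends on \<open>x\<close> only through the last segment, and the ratio of its entries is
  the continued fraction with tail \<open>1/(-(x - x\<^sub>N\<^sub>-\<^sub>1) sin\<^sup>2\<theta>\<^sub>N z)\<close>.  The signs of the imaginary
  parts of the partial quotients keep all denominators away from zero, so the ratio is
  continuous in the tail, which tends to \<open>1/(-l\<^sub>\<kappa> z)\<close> (or \<open>0\<close>) as \<open>x \<rightarrow> L\<close>.
\<close>

section \<open>Two-by-two matrices\<close>

definition mat2 :: "complex \<Rightarrow> complex \<Rightarrow> complex \<Rightarrow> complex \<Rightarrow> complex^2^2" where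
  "mat2 a b c d = (\<chi> i j. if i = 1 then (if j = 1 then a else b) else (if j = 1 then c else d))"

lemma mat2_nth [simp]:
  "mat2 a b c d $ 1 $ 1 = a" "mat2 a b c d $ 1 $ 2 = b"
  "mat2 a b c d $ 2 $ 1 = c" "mat2 a b c d $ 2 $ 2 = d"
  by (simp_all add: mat2_def)

lemma mat2_eta: "A = mat2 (A$1$1) (A$1$2) (A$2$1) (A$2$2)"
  unfolding mat2_def vec_eq_iff forall_2 by simp

lemma mat2_eq_iff: "mat2 a b c d = mat2 a' b' c' d' \<longleftrightarrow> a = a' \<and> b = b' \<and> c = c' \<and> d = d'"
  by (metis mat2_nth)

lemma mat2_mult [simp]:
  "mat2 a b c d ** mat2 a' b' c' d' = mat2 (a*a' + b*c') (a*b' + b*d') (c*a' + d*c') (c*b' + d*d')"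
  by (simp add: mat2_def matrix_matrix_mult_def vec_eq_iff forall_2 sum_2)

lemma mat2_diff [simp]: "mat2 a b c d - mat2 a' b' c' d' = mat2 (a-a') (b-b') (c-c') (d-d')"
  by (simp add: mat2_def vec_eq_iff forall_2)

lemma scaleM_mat2 [simp]: "scaleM w (mat2 a b c d) = mat2 (w*a) (w*b) (w*c) (w*d)"
  by (simp add: mat2_def scaleM_def vec_eq_iff forall_2)

lemma mat_1_mat2: "mat 1 = mat2 1 0 0 1"
  by (simp add: mat2_def mat_def vec_eq_iff forall_2)

lemma zero_mat2: "(0::complex^2^2) = mat2 0 0 0 0"
  by (simp add: mat2_def vec_eq_iff forall_2)

lemma Jmat_mat2: "Jmat = mat2 0 1 (-1) 0"
  by (simp add: mat2_def Jmat_def vec_eq_iff forall_2)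

lemma Hth_mat2: "Hth t = mat2 ((cos t)^2) (cos t * sin t) (cos t * sin t) ((sin t)^2)"
  by (simp add: mat2_def Hth_def vec_eq_iff forall_2 power2_eq_square)

lemma scaleM_add: "scaleM w (A + B) = scaleM w A + scaleM w B"
  by (simp add: scaleM_def vec_eq_iff distrib_left)

lemma scaleM_scaleR: "scaleM w (r *\<^sub>R A) = scaleM (w * of_real r) A"
  by (simp add: scaleM_def vec_eq_iff scaleR_conv_of_real[where 'a=complex] mult.assoc)

lemma matrix_mult_scaleM: "A ** scaleM w B = scaleM w (A ** B)"
  by (simp add: scaleM_def vec_eq_iff matrix_matrix_mult_def sum_distrib_left algebra_simps)

lemma linear_matrix_lmult: "linear (\<lambda>X::complex^2^2. A ** X)"
  by (rule linearI)
     (simp_all add: matrix_add_ldistrib vec_eq_iff matrix_matrix_mult_def sum_distrib_left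
        scaleR_conv_of_real[where 'a=complex] sum.distrib algebra_simps)

lemma matrix_sub_ldistrib: "A ** (B - C) = A ** B - A ** (C::complex^2^2)"
  using linear_diff[OF linear_matrix_lmult[of A]] by simp

lemma JH_nilpotent: "(Jmat ** Hth t) ** (Jmat ** Hth t) = 0"
  by (simp add: Jmat_mat2 Hth_mat2 zero_mat2 mat2_eq_iff algebra_simps power2_eq_square)

section \<open>The fundamental solution on a piecewise constant Hamiltonian\<close>

text \<open>Since \<open>(J H)\<^sup>2 = 0\<close>, the integrand \<open>J H U\<close> is constant on the segment, so \<open>U\<close> is affine there.\<close>
lemma solves_U_constant_step:
  assumes sol: "solves_U N ell th L z U"
    and "0 \<le> a" "a \<le> x" "x \<le> b" "ereal x < L"
    and H_const: "\<And>t. a \<le> t \<Longrightarrow> t < b \<Longrightarrow> hamH N ell th t = H"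
    and nil: "(Jmat ** H) ** (Jmat ** H) = 0"
  shows "U x = U a - scaleM (z * of_real (x - a)) (Jmat ** H ** U a)"
proof -
  define f where "f = (\<lambda>t. Jmat ** hamH N ell th t ** U t)"
  have eq: "U y = U a - scaleM z (integral {a..y} f)" and intg: "f integrable_on {a..y}"
    if "a \<le> y" "y \<le> x" for y
  proof -
    have "ereal y < L" "ereal a < L"
      using assms that by (meson ereal_less_eq(3) order_le_less_trans order.trans)+
    then have iy: "f integrable_on {0..y}" and Uy: "U y = mat 1 - scaleM z (integral {0..y} f)"
      and Ua: "U a = mat 1 - scaleM z (integral {0..a} f)"
      using sol assms that unfolding solves_U_def f_def by auto
    have "integral {0..a} f + integral {a..y} f = integral {0..y} f"
      using Henstock_Kurzweil_Integration.integral_combine[OF _ _ iy, of a] assms that by auto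
    then show "U y = U a - scaleM z (integral {a..y} f)"
      unfolding Uy Ua by (metis scaleM_add diff_diff_eq)
    show "f integrable_on {a..y}"
      by (rule integrable_subinterval_real[OF iy]) (use assms in auto)
  qed
  have const: "Jmat ** H ** U y = Jmat ** H ** U a" if "a \<le> y" "y < b" "y \<le> x" for y
  proof -
    have "Jmat ** H ** U y = Jmat ** H ** U a - scaleM z ((Jmat ** H) ** integral {a..y} f)"
      using eq[OF that(1,3)] by (simp add: matrix_sub_ldistrib matrix_mult_scaleM)
    also have "(Jmat ** H) ** integral {a..y} f = integral {a..y} ((\<lambda>X. (Jmat ** H) ** X) \<circ> f)"
      by (rule integral_linear[symmetric, OF intg[OF that(1,3)]])
         (rule linear_conv_bounded_linear[THEN iffD1, OF linear_matrix_lmult])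
    also have "\<dots> = integral {a..y} (\<lambda>t. 0)"
    proof (rule integral_cong)
      fix t assume "t \<in> {a..y}"
      then have "f t = Jmat ** H ** U t" unfolding f_def using H_const[of t] that by auto
      then show "((\<lambda>X. (Jmat ** H) ** X) \<circ> f) t = 0"
        by (simp add: matrix_mul_assoc) (metis matrix_mul_assoc nil times0_left)
    qed
    finally show ?thesis by (simp add: scaleM_def vec_eq_iff)
  qed
  have "(f has_integral ((x - a) *\<^sub>R (Jmat ** H ** U a))) {a..x}"
  proof (rule has_integral_spike_finite[where S="{x}"])
    fix t assume "t \<in> {a..x} - {x}"
    then show "f t = Jmat ** H ** U a"
      unfolding f_def using H_const[of t] const[of t] assms by auto
  qed (use has_integral_const_real[of "Jmat ** H ** U a" a x] assms in \<open>auto simp: content_real\<close>)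
  then show ?thesis
    using eq[OF \<open>a \<le> x\<close> order_refl] by (simp add: integral_unique scaleM_scaleR)
qed

definition transfer :: "complex \<Rightarrow> real \<Rightarrow> real \<Rightarrow> complex^2^2" where
  "transfer z l t = mat2
     (1 - z * of_real l * of_real (cos t) * of_real (sin t)) (- z * of_real l * (of_real (sin t))^2)
     (z * of_real l * (of_real (cos t))^2) (1 + z * of_real l * of_real (cos t) * of_real (sin t))"

lemma transfer_mult: "A - scaleM (z * of_real l) (Jmat ** Hth t ** A) = transfer z l t ** A"
  by (subst (1 2 3) mat2_eta[of A])
     (simp add: Jmat_mat2 Hth_mat2 transfer_def mat2_eq_iff algebra_simps power2_eq_square)

primrec transfer_prod :: "complex \<Rightarrow> (nat \<Rightarrow> real) \<Rightarrow> (nat \<Rightarrow> real) \<Rightarrow> nat \<Rightarrow> complex^2^2" where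
  "transfer_prod z ell th 0 = mat 1"
| "transfer_prod z ell th (Suc k) = transfer z (ell k) (th k) ** transfer_prod z ell th k"

lemma xpt_Suc: "xpt ell (Suc k) = xpt ell k + ell k"
  by (simp add: xpt_def)

lemma xpt_mono:
  assumes "\<And>k. k < N \<Longrightarrow> ell k > 0" "m \<le> n" "n \<le> N"
  shows "xpt ell m \<le> xpt ell n"
  unfolding xpt_def using assms by (intro sum_mono2) (auto intro: less_imp_le)

lemma xpt_nonneg:
  assumes "\<And>k. k < N \<Longrightarrow> ell k > 0" "n \<le> N"
  shows "0 \<le> xpt ell n"
  using xpt_mono[of N ell 0 n, OF assms(1) _ assms(2)] by (simp add: xpt_def)

lemma hamH_on_segment:
  assumes pos: "\<And>k. k < N \<Longrightarrow> ell k > 0" and "k < N"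
    and t: "xpt ell k \<le> t" "t < xpt ell (Suc k)"
  shows "hamH N ell th t = Hth (th k)"
proof -
  have other: "xpt ell i \<le> t \<and> t < xpt ell (Suc i) \<longleftrightarrow> i = k" if "i < N" for i
    using xpt_mono[of N ell "Suc i" k, OF pos] xpt_mono[of N ell "Suc k" i, OF pos] that assms
    by (cases i k rule: linorder_cases) auto
  have "xpt ell (Suc k) \<le> xpt ell N"
    using xpt_mono[of N ell "Suc k" N, OF pos] assms by auto
  then show ?thesis
    unfolding hamH_def using other t \<open>k < N\<close> by (simp add: sum.delta)
qed

lemma hamH_beyond_last:
  assumes pos: "\<And>k. k < N \<Longrightarrow> ell k > 0" and "xpt ell N \<le> t"
  shows "hamH N ell th t = Hth (th N)"
proof -
  have "(if xpt ell i \<le> t \<and> t < xpt ell (Suc i) then Hth (th i) else 0) = 0" if "i < N" for i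
    using xpt_mono[of N ell "Suc i" N, OF pos] that assms by auto
  then show ?thesis unfolding hamH_def using assms by (simp add: sum.neutral)
qed

lemma U_at_xpt:
  assumes pos: "\<And>k. k < N \<Longrightarrow> ell k > 0" and L: "ereal (xpt ell N) < L"
    and sol: "solves_U N ell th L z U" and "k \<le> N"
  shows "U (xpt ell k) = transfer_prod z ell th k"
  using \<open>k \<le> N\<close>
proof (induction k)
  case 0
  have "ereal 0 < L"
    using xpt_nonneg[of N ell N, OF pos order_refl] L by (meson ereal_less_eq(3) order_le_less_trans)
  then show ?case
    using sol unfolding solves_U_def by (auto simp: xpt_def scaleM_def vec_eq_iff mat_def)
next
  case (Suc k)
  have "ereal (xpt ell (Suc k)) < L"
    using L xpt_mono[of N ell "Suc k" N, OF pos Suc.prems order_refl] by (meson ereal_less_eq(3) order_le_less_trans)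
  then have "U (xpt ell (Suc k)) = U (xpt ell k) - scaleM (z * of_real (xpt ell (Suc k) - xpt ell k))
      (Jmat ** Hth (th k) ** U (xpt ell k))"
    using Suc.prems pos
    by (intro solves_U_constant_step[OF sol xpt_nonneg[of N ell k, OF pos]])
       (auto simp: xpt_Suc intro: less_imp_le hamH_on_segment JH_nilpotent)
  then show ?case using Suc by (simp add: xpt_Suc transfer_mult)
qed

lemma U_beyond_last:
  assumes pos: "\<And>k. k < N \<Longrightarrow> ell k > 0" and L: "ereal (xpt ell N) < L"
    and sol: "solves_U N ell th L z U" and x: "xpt ell N \<le> x" "ereal x < L"
  shows "U x = transfer z (x - xpt ell N) (th N) ** transfer_prod z ell th N"
proof -
  have "U x = U (xpt ell N) - scaleM (z * of_real (x - xpt ell N))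
      (Jmat ** Hth (th N) ** U (xpt ell N))"
    using pos x by (intro solves_U_constant_step[OF sol xpt_nonneg[of N ell N, OF pos order_refl]])
                   (auto intro: hamH_beyond_last JH_nilpotent)
  then show ?thesis by (simp only: transfer_mult U_at_xpt[OF pos L sol order_refl])
qed

section \<open>Shears and continued fractions\<close>

definition lower_shear :: "complex \<Rightarrow> complex^2^2" where
  "lower_shear g = mat2 1 0 g 1"

definition upper_shear :: "complex \<Rightarrow> complex^2^2" where
  "upper_shear a = mat2 1 a 0 1"

lemma lower_shear_mult: "lower_shear g ** lower_shear h = lower_shear (g + h)"
  by (simp add: lower_shear_def add.commute)

lemma lower_shear_0: "lower_shear 0 = mat 1"
  by (simp add: lower_shear_def mat_1_mat2)

lemma transfer_sin_eq_0: "sin t = 0 \<Longrightarrow> transfer z l t = lower_shear (z * of_real l)"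
  using sin_cos_squared_add[of t]
  by (simp add: transfer_def lower_shear_def flip: of_real_power)

lemma lower_shear_transfer:
  assumes "sin t \<noteq> 0"
  shows "lower_shear g ** transfer z l t =
    lower_shear (g - of_real (cot t)) ** upper_shear (- z * of_real (l * (sin t)^2)) ** lower_shear (of_real (cot t))"
proof -
  have "cos t = sin t * cot t" using assms by (simp add: cot_def)
  then show ?thesis
    by (simp add: transfer_def lower_shear_def upper_shear_def mat2_eq_iff algebra_simps power2_eq_square)
qed

primrec shear_prod :: "(nat \<Rightarrow> complex) \<Rightarrow> (nat \<Rightarrow> complex) \<Rightarrow> nat \<Rightarrow> complex^2^2" where
  "shear_prod a b 0 = mat 1"
| "shear_prod a b (Suc n) = lower_shear (b n) ** upper_shear (a n) ** shear_prod a b n"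

lemma contfrac_Suc_tail: "contfrac a b t (Suc n) = contfrac a b (1 / (a n + 1 / (b n + t))) n"
  by (induction n arbitrary: a b) auto

definition row_mult :: "complex \<times> complex \<Rightarrow> complex^2^2 \<Rightarrow> complex \<times> complex" where
  "row_mult v M = (fst v * M$1$1 + snd v * M$2$1, fst v * M$1$2 + snd v * M$2$2)"

definition row_ratio :: "complex \<times> complex \<Rightarrow> complex^2^2 \<Rightarrow> complex" where
  "row_ratio v M = fst (row_mult v M) / snd (row_mult v M)"

lemma row_mult_mult: "row_mult (row_mult v A) B = row_mult v (A ** B)"
  by (simp add: row_mult_def matrix_matrix_mult_def sum_2 algebra_simps)

lemma row_mult_scale: "row_mult (c * p, c * q) M = (c * fst (row_mult (p, q) M), c * snd (row_mult (p, q) M))"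
  by (simp add: row_mult_def algebra_simps)

lemma row_ratio_scale: "c \<noteq> 0 \<Longrightarrow> row_ratio (c * p, c * q) M = row_ratio (p, q) M"
  by (simp add: row_ratio_def row_mult_scale)

lemma row_mult_lower_shear: "row_mult (1, 0) (lower_shear g ** M) = row_mult (1, 0) M"
  by (simp add: row_mult_mult[symmetric]) (simp add: row_mult_def lower_shear_def)

lemma row_mult_upper_shear: "row_mult (1, 0) (upper_shear w ** M) = row_mult (1, w) M"
  by (simp add: row_mult_mult[symmetric]) (simp add: row_mult_def upper_shear_def)

lemma tendsto_row_ratio:
  assumes "(f \<longlongrightarrow> t) F" "snd (row_mult (t, 1) M) \<noteq> 0"
  shows "((\<lambda>x. row_ratio (f x, 1) M) \<longlongrightarrow> row_ratio (t, 1) M) F"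
  using assms unfolding row_ratio_def row_mult_def by (auto intro!: tendsto_intros)

lemma Im_one_div_mult: "Im (1 / w) * c = - (Im w * c) / (cmod w)^2"
  by (simp add: Im_divide cmod_power2)

lemma Im_one_div_mult_nonpos: "0 \<le> Im w * c \<Longrightarrow> Im (1 / w) * c \<le> 0"
  unfolding Im_one_div_mult by (simp add: divide_nonneg_nonneg)

lemma Im_one_div_mult_pos: "Im w * c < 0 \<Longrightarrow> 0 < Im (1 / w) * c"
  unfolding Im_one_div_mult by (cases "w = 0") (auto simp: divide_neg_pos)

text \<open>
  Evaluated from the tail outwards, every partial value stays in the half plane of \<open>z\<close>,
  so no denominator vanishes.
\<close>
lemma shear_prod_row_ratio:
  assumes "\<And>i. i < n \<Longrightarrow> Im (a i) * Im z < 0"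
    and "\<And>i. i < n \<Longrightarrow> b i \<noteq> 0 \<and> 0 \<le> Im (b i) * Im z"
    and "0 < Im t * Im z \<or> t = 0"
  shows "snd (row_mult (t, 1) (shear_prod a b n)) \<noteq> 0 \<and>
         row_ratio (t, 1) (shear_prod a b n) = contfrac a b t n"
  using assms
proof (induction n arbitrary: t)
  case 0
  then show ?case by (simp add: row_mult_def row_ratio_def mat_1_mat2)
next
  case (Suc n)
  define s where "s = b n + t"
  define D where "D = a n + 1 / s"
  have "b n \<noteq> 0" "0 \<le> Im (b n) * Im z" using Suc.prems(2)[of n] by auto
  then have "0 \<le> Im s * Im z" "s \<noteq> 0"
    using Suc.prems(3) by (auto simp: s_def distrib_right add_eq_0_iff)
  have "Im D * Im z < 0"
    using Suc.prems(1)[of n] Im_one_div_mult_nonpos[OF \<open>0 \<le> Im s * Im z\<close>]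
    by (simp add: D_def distrib_right)
  then have "D \<noteq> 0" by auto
  have IH: "snd (row_mult (1 / D, 1) (shear_prod a b n)) \<noteq> 0 \<and>
      row_ratio (1 / D, 1) (shear_prod a b n) = contfrac a b (1 / D) n"
    by (rule Suc.IH) (use Suc.prems Im_one_div_mult_pos[OF \<open>Im D * Im z < 0\<close>] in auto)
  have "row_mult (t, 1) (shear_prod a b (Suc n)) = row_mult ((s * D) * (1 / D), (s * D) * 1) (shear_prod a b n)"
    using \<open>D \<noteq> 0\<close> \<open>s \<noteq> 0\<close>
    by (simp add: row_mult_mult[symmetric] matrix_mul_assoc)
       (simp add: row_mult_def lower_shear_def upper_shear_def s_def D_def field_simps)
  also have "\<dots> = (s * D * fst (row_mult (1 / D, 1) (shear_prod a b n)),
      s * D * snd (row_mult (1 / D, 1) (shear_prod a b n)))"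
    by (rule row_mult_scale)
  finally show ?case
    using IH \<open>D \<noteq> 0\<close> \<open>s \<noteq> 0\<close>
    unfolding row_ratio_def contfrac_Suc_tail s_def[symmetric] D_def[symmetric] by simp
qed

section \<open>Angles in \<open>\<pi>\<int>\<close> and the indices \<open>k(j)\<close>\<close>

lemma inPiZ_iff_sin_eq_0: "inPiZ t \<longleftrightarrow> sin t = 0"
  unfolding inPiZ_def sin_zero_iff_int2 by simp

lemma cntNZ_0 [simp]: "cntNZ th 0 = 0"
  by (simp add: cntNZ_def)

lemma cntNZ_Suc: "cntNZ th (Suc k) = cntNZ th k + (if inPiZ (th k) then 0 else 1)"
proof -
  have "{i. i < Suc k \<and> \<not> inPiZ (th i)} =
      (if inPiZ (th k) then {i. i < k \<and> \<not> inPiZ (th i)} else insert k {i. i < k \<and> \<not> inPiZ (th i)})"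
    by (auto simp: less_Suc_eq)
  then show ?thesis unfolding cntNZ_def by simp
qed

lemma cntNZ_mono: "m \<le> n \<Longrightarrow> cntNZ th m \<le> cntNZ th n"
  unfolding cntNZ_def by (rule card_mono) auto

lemma cntNZ_attains: "j \<le> cntNZ th n \<Longrightarrow> \<exists>k\<le>n. cntNZ th k = j"
proof (induction n)
  case (Suc n)
  then show ?case
    by (cases "j \<le> cntNZ th n") (auto simp: cntNZ_Suc le_Suc_eq split: if_splits)
qed simp

lemma kappa_eq_cntNZ:
  assumes "\<not> inPiZ (th 0)" "\<not> inPiZ (th N)"
  shows "kappa N th = cntNZ th N"
proof (cases N)
  case (Suc M)
  define S where "S = {i. 1 \<le> i \<and> i < N \<and> \<not> inPiZ (th i)}"
  have "{k. 1 \<le> k \<and> k \<le> N \<and> \<not> inPiZ (th k)} = insert N S"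
       "{i. i < N \<and> \<not> inPiZ (th i)} = insert 0 S"
    unfolding S_def using assms Suc by auto
  moreover have "finite S" "N \<notin> S" "0 \<notin> S" unfolding S_def by auto
  ultimately show ?thesis unfolding kappa_def cntNZ_def by simp
qed (simp add: kappa_def)

lemma not_inPiZ_after_inPiZ:
  assumes "a < b" "b < a + pi" "inPiZ a"
  shows "\<not> inPiZ b"
proof
  assume "inPiZ b"
  then obtain m n :: int where "b = m * pi" "a = n * pi"
    using \<open>inPiZ a\<close> unfolding inPiZ_def by auto
  with assms(1,2) have "real_of_int n * pi < m * pi" "m * pi < (real_of_int n + 1) * pi"
    by (simp_all add: algebra_simps)
  then have "n < m" "m < n + 1" by (simp_all only: mult_less_cancel_right_pos[OF pi_gt_zero] of_int_less_iff)
  then show False by linarith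
qed

lemma cot_diff_nonzero:
  assumes "sin a \<noteq> 0" "sin b \<noteq> 0" "a < b" "b < a + pi"
  shows "cot b - cot a \<noteq> 0"
proof -
  have "cot b - cot a = - sin (b - a) / (sin a * sin b)"
    using assms by (simp add: cot_def sin_diff field_simps)
  moreover have "sin (b - a) > 0" using assms by (intro sin_gt_zero) auto
  ultimately show ?thesis using assms by simp
qed

locale angle_sequence =
  fixes N :: nat and th :: "nat \<Rightarrow> real"
  assumes not_inPiZ_0: "\<not> inPiZ (th 0)" and not_inPiZ_N: "\<not> inPiZ (th N)"
    and th_incr: "\<And>k. k < N \<Longrightarrow> th k < th (Suc k) \<and> th (Suc k) < th k + pi"
begin

lemma kappa_eq: "kappa N th = cntNZ th N"
  using kappa_eq_cntNZ[OF not_inPiZ_0 not_inPiZ_N] .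

lemma kj_greatest:
  assumes "j \<le> kappa N th"
  shows "kj N th j \<le> N" "cntNZ th (kj N th j) = j"
    and "\<And>k. k \<le> N \<Longrightarrow> cntNZ th k = j \<Longrightarrow> k \<le> kj N th j"
proof -
  obtain k where "k \<le> N" "cntNZ th k = j"
    using cntNZ_attains assms kappa_eq by metis
  then show "kj N th j \<le> N" "cntNZ th (kj N th j) = j"
    unfolding kj_def using GreatestI_nat[of "\<lambda>k. k \<le> N \<and> cntNZ th k = j" k N] by auto
  show "\<And>k. k \<le> N \<Longrightarrow> cntNZ th k = j \<Longrightarrow> k \<le> kj N th j"
    unfolding kj_def using Greatest_le_nat[of "\<lambda>k. k \<le> N \<and> cntNZ th k = j" _ N] by auto
qed

text \<open>After a non-multiple of \<open>\<pi>\<close> the count increases, so \<open>k\<close> is the last index with count \<open>j\<close>.\<close>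
lemma kj_eqI:
  assumes "k \<le> N" "cntNZ th k = j" "k < N \<Longrightarrow> \<not> inPiZ (th k)"
  shows "kj N th j = k"
  unfolding kj_def
proof (rule Greatest_equality)
  fix k' assume k': "k' \<le> N \<and> cntNZ th k' = j"
  show "k' \<le> k"
  proof (rule ccontr)
    assume "\<not> k' \<le> k"
    then have "cntNZ th (Suc k) \<le> cntNZ th k'" by (intro cntNZ_mono) auto
    then show False using assms k' \<open>\<not> k' \<le> k\<close> by (auto simp: cntNZ_Suc)
  qed
qed (use assms in auto)

lemma kj_0: "kj N th 0 = 0"
  using not_inPiZ_0 by (intro kj_eqI) auto

lemma kj_kappa: "kj N th (kappa N th) = N"
  by (intro kj_eqI) (auto simp: kappa_eq)

lemma kj_less_N: "j < kappa N th \<Longrightarrow> kj N th j < N"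
  using kj_greatest[of j] kappa_eq by (metis le_neq_implies_less less_imp_le less_irrefl)

lemma not_inPiZ_kj:
  assumes "j \<le> kappa N th"
  shows "\<not> inPiZ (th (kj N th j))"
proof
  assume pi: "inPiZ (th (kj N th j))"
  then have "j < kappa N th" using assms kj_kappa not_inPiZ_N le_neq_implies_less by metis
  then have "Suc (kj N th j) \<le> kj N th j"
    using pi kj_less_N by (intro kj_greatest(3)[OF assms]) (simp_all add: cntNZ_Suc kj_greatest(2)[OF assms] Suc_leI)
  then show False by simp
qed

text \<open>Two consecutive angles cannot both lie in \<open>\<pi>\<int>\<close>, so \<open>k(j+1) - k(j) \<in> {1, 2}\<close>.\<close>
lemma kj_Suc_cases:
  assumes "j < kappa N th"
  obtains "\<not> inPiZ (th (Suc (kj N th j)))" "kj N th (Suc j) = Suc (kj N th j)"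
    | "inPiZ (th (Suc (kj N th j)))" "Suc (kj N th j) < N"
      "kj N th (Suc j) = Suc (Suc (kj N th j))"
proof -
  define k where "k = kj N th j"
  have "k < N" using kj_less_N[OF assms] by (simp add: k_def)
  have count: "cntNZ th (Suc k) = Suc j"
    using kj_greatest(2)[of j] not_inPiZ_kj[of j] assms by (simp add: k_def cntNZ_Suc)
  show thesis
  proof (cases "inPiZ (th (Suc k))")
    case False
    then have "kj N th (Suc j) = Suc k"
      using \<open>k < N\<close> count by (intro kj_eqI) auto
    then show thesis using that(1) False by (simp add: k_def)
  next
    case True
    then have "Suc k < N" using not_inPiZ_N \<open>k < N\<close> by (metis Suc_lessI)
    then have "\<not> inPiZ (th (Suc (Suc k)))"
      using True th_incr[of "Suc k"] not_inPiZ_after_inPiZ by blast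
    then have "kj N th (Suc j) = Suc (Suc k)"
      using \<open>Suc k < N\<close> count True by (intro kj_eqI) (auto simp: cntNZ_Suc)
    then show thesis using that(2) True \<open>Suc k < N\<close> by (simp add: k_def)
  qed
qed

end

section \<open>The fundamental solution as a continued fraction\<close>

locale hamburger = angle_sequence N th for N th +
  fixes ell :: "nat \<Rightarrow> real"
  assumes ell_pos: "\<And>k. k < N \<Longrightarrow> ell k > 0"
    and th_0: "th 0 = pi / 2"
begin

definition cf_a :: "complex \<Rightarrow> nat \<Rightarrow> complex" where
  "cf_a z = (\<lambda>j. - complex_of_real (lj N ell th j) * z)"

definition cf_b :: "complex \<Rightarrow> nat \<Rightarrow> complex" where
  "cf_b z = (\<lambda>j. complex_of_real (omegaj N th j) + complex_of_real (upsj N ell th j) * z)"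

lemma cfWT_eq_contfrac:
  "cfWT N ell th L z = contfrac (cf_a z) (cf_b z) (lastTerm N ell th L z) (kappa N th)"
  unfolding cfWT_def cf_a_def cf_b_def ..

lemma shear_prod_eq_transfer_prod:
  "j \<le> kappa N th \<Longrightarrow>
    lower_shear (of_real (cot (th (kj N th j)))) ** transfer_prod z ell th (kj N th j)
    = shear_prod (cf_a z) (cf_b z) j"
proof (induction j)
  case 0
  then show ?case by (simp add: kj_0 th_0 cot_def lower_shear_0)
next
  case (Suc j)
  define k where "k = kj N th j"
  have j: "j < kappa N th" using Suc.prems by simp
  have "sin (th k) \<noteq> 0" using not_inPiZ_kj[of j] j by (simp add: k_def inPiZ_iff_sin_eq_0)
  note split = lower_shear_transfer[OF this]
  have a: "cf_a z j = - z * of_real (ell k * (sin (th k))^2)"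
    by (simp add: cf_a_def lj_def k_def)
  have IH: "lower_shear (of_real (cot (th k))) ** transfer_prod z ell th k = shear_prod (cf_a z) (cf_b z) j"
    using Suc j by (simp add: k_def)
  have "lower_shear (of_real (cot (th (kj N th (Suc j))))) ** transfer_prod z ell th (kj N th (Suc j))
      = lower_shear (cf_b z j) ** upper_shear (cf_a z j) **
        (lower_shear (of_real (cot (th k))) ** transfer_prod z ell th k)"
    using j
  proof (cases rule: kj_Suc_cases)
    case 1
    then have b: "cf_b z j = of_real (cot (th (Suc k))) - of_real (cot (th k))"
      by (simp add: cf_b_def omegaj_def upsj_def k_def)
    have "lower_shear (of_real (cot (th (Suc k)))) ** transfer_prod z ell th (Suc k)
        = (lower_shear (of_real (cot (th (Suc k)))) ** transfer z (ell k) (th k)) ** transfer_prod z ell th k"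
      by (simp add: matrix_mul_assoc)
    then show ?thesis using 1 by (simp only: split a b matrix_mul_assoc flip: k_def)
  next
    case 2
    then have "sin (th (Suc k)) = 0" by (simp add: k_def inPiZ_iff_sin_eq_0)
    have b: "cf_b z j = of_real (cot (th (Suc (Suc k)))) + z * of_real (ell (Suc k)) - of_real (cot (th k))"
      using 2 by (simp add: cf_b_def omegaj_def upsj_def k_def algebra_simps)
    have "lower_shear (of_real (cot (th (Suc (Suc k))))) ** transfer_prod z ell th (Suc (Suc k))
        = (lower_shear (of_real (cot (th (Suc (Suc k))))) ** transfer z (ell (Suc k)) (th (Suc k)))
          ** transfer z (ell k) (th k) ** transfer_prod z ell th k"
      by (simp add: matrix_mul_assoc)
    also have "\<dots> = (lower_shear (of_real (cot (th (Suc (Suc k)))) + z * of_real (ell (Suc k)))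
          ** transfer z (ell k) (th k)) ** transfer_prod z ell th k"
      by (simp add: transfer_sin_eq_0 \<open>sin (th (Suc k)) = 0\<close> lower_shear_mult matrix_mul_assoc)
    finally show ?thesis using 2 by (simp only: split a b matrix_mul_assoc flip: k_def)
  qed
  then show ?case by (simp add: IH)
qed

lemma Im_cf_a:
  assumes "Im z \<noteq> 0" "j < kappa N th"
  shows "Im (cf_a z j) * Im z < 0"
proof -
  have "ell (kj N th j) > 0" "sin (th (kj N th j)) \<noteq> 0"
    using assms ell_pos kj_less_N not_inPiZ_kj[of j] by (auto simp: inPiZ_iff_sin_eq_0)
  then have "0 < lj N ell th j" by (simp add: lj_def)
  moreover have "0 < Im z * Im z" using assms(1) not_real_square_gt_zero by blast
  ultimately have "0 < lj N ell th j * (Im z * Im z)" by (rule mult_pos_pos)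
  then show ?thesis by (simp add: cf_a_def mult.assoc)
qed

lemma cf_b_nonzero_Im:
  assumes "Im z \<noteq> 0" "j < kappa N th"
  shows "cf_b z j \<noteq> 0 \<and> 0 \<le> Im (cf_b z j) * Im z"
proof -
  define k where "k = kj N th j"
  have "k < N" "sin (th k) \<noteq> 0"
    using assms kj_less_N not_inPiZ_kj[of j] by (auto simp: k_def inPiZ_iff_sin_eq_0)
  from assms(2) show ?thesis
  proof (cases rule: kj_Suc_cases)
    case 1
    then have "cot (th (Suc k)) - cot (th k) \<noteq> 0"
      using \<open>k < N\<close> \<open>sin (th k) \<noteq> 0\<close> th_incr[of k]
      by (intro cot_diff_nonzero) (auto simp: k_def inPiZ_iff_sin_eq_0)
    then show ?thesis using 1 by (simp add: cf_b_def omegaj_def upsj_def k_def)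
  next
    case 2
    then have "ell (Suc k) > 0" "Im (cf_b z j) = ell (Suc k) * Im z"
      using ell_pos by (simp_all add: cf_b_def upsj_def k_def)
    then show ?thesis using assms(1) by (auto simp: mult.assoc)
  qed
qed

definition truncated_tail :: "complex \<Rightarrow> real \<Rightarrow> complex" where
  "truncated_tail z x = 1 / (- complex_of_real ((x - xpt ell N) * (sin (th N))^2) * z)"

lemma sin_N_nonzero: "sin (th N) \<noteq> 0"
  using not_inPiZ_N by (simp add: inPiZ_iff_sin_eq_0)

lemma U_row_ratio:
  assumes "ereal (xpt ell N) < L" "solves_U N ell th L z U" "z \<noteq> 0"
    and "xpt ell N < x" "ereal x < L"
  shows "U x $ 1 $ 1 / U x $ 1 $ 2 =
    row_ratio (truncated_tail z x, 1) (shear_prod (cf_a z) (cf_b z) (kappa N th))"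
proof -
  define w where "w = - z * of_real ((x - xpt ell N) * (sin (th N))^2)"
  define c where "c = complex_of_real (cot (th N))"
  have "w \<noteq> 0" using assms sin_N_nonzero by (simp add: w_def)
  have Q: "lower_shear c ** transfer_prod z ell th N = shear_prod (cf_a z) (cf_b z) (kappa N th)"
    using shear_prod_eq_transfer_prod[of "kappa N th" z] by (simp add: kj_kappa c_def)
  have "row_mult (1, 0) (U x) =
      row_mult (1, 0) (lower_shear 0 ** transfer z (x - xpt ell N) (th N) ** transfer_prod z ell th N)"
    using U_beyond_last[OF ell_pos assms(1,2) less_imp_le[OF assms(4)] assms(5)]
    by (simp add: lower_shear_0)
  also have "\<dots> = row_mult (1, 0) (lower_shear (0 - c) ** (upper_shear w ** (lower_shear c ** transfer_prod z ell th N)))"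
    by (simp only: lower_shear_transfer[OF sin_N_nonzero] matrix_mul_assoc flip: w_def c_def)
  also have "\<dots> = row_mult (w * (1 / w), w * 1) (shear_prod (cf_a z) (cf_b z) (kappa N th))"
    using \<open>w \<noteq> 0\<close> by (simp add: row_mult_lower_shear row_mult_upper_shear Q)
  finally have "U x $ 1 $ 1 / U x $ 1 $ 2 =
      row_ratio (w * (1 / w), w * 1) (shear_prod (cf_a z) (cf_b z) (kappa N th))"
    by (simp add: row_ratio_def row_mult_def prod_eq_iff)
  also have "\<dots> = row_ratio (1 / w, 1) (shear_prod (cf_a z) (cf_b z) (kappa N th))"
    by (rule row_ratio_scale[OF \<open>w \<noteq> 0\<close>])
  also have "1 / w = truncated_tail z x"
    by (simp add: truncated_tail_def w_def mult.commute)
  finally show ?thesis .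
qed

lemma lastTerm_sign:
  assumes "ereal (xpt ell N) < L" "Im z \<noteq> 0"
  shows "0 < Im (lastTerm N ell th L z) * Im z \<or> lastTerm N ell th L z = 0"
proof (cases "L = \<infinity>")
  case False
  define l where "l = (real_of_ereal L - xpt ell N) * (sin (th N))^2"
  obtain r where "L = ereal r" "xpt ell N < r"
    using assms(1) False by (cases L) auto
  then have "0 < l" using sin_N_nonzero by (simp add: l_def)
  moreover have "0 < Im z * Im z" using assms(2) not_real_square_gt_zero by blast
  ultimately have "0 < l * (Im z * Im z)" by (rule mult_pos_pos)
  then have "Im (- complex_of_real l * z) * Im z < 0"
    by (simp add: mult.assoc)
  then have "0 < Im (1 / (- complex_of_real l * z)) * Im z"
    by (rule Im_one_div_mult_pos)
  then show ?thesis using False unfolding lastTerm_def l_def by simp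
qed (simp add: lastTerm_def)

lemma eventually_toL_beyond_last:
  assumes "ereal (xpt ell N) < L"
  shows "eventually (\<lambda>x. xpt ell N < x \<and> ereal x < L) (toL L)"
proof (cases L)
  case (real r)
  then show ?thesis
    using eventually_at_left_real[of "xpt ell N" r] assms by (auto simp: toL_def elim: eventually_mono)
next
  case PInf
  then show ?thesis by (simp add: toL_def eventually_gt_at_top)
qed (use assms in simp)

lemma tendsto_truncated_tail:
  assumes "ereal (xpt ell N) < L" "z \<noteq> 0"
  shows "(truncated_tail z \<longlongrightarrow> lastTerm N ell th L z) (toL L)"
proof (cases L)
  case (real r)
  then have "(truncated_tail z \<longlongrightarrow> truncated_tail z r) (at_left r)"
    unfolding truncated_tail_def using assms sin_N_nonzero by (intro tendsto_intros) auto
  then show ?thesis using real by (simp add: toL_def lastTerm_def truncated_tail_def)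
next
  case PInf
  have "filterlim (\<lambda>x. (x - a) * c) at_top at_top" if "c > 0" for a c :: real
    using that by real_asymp
  then have unbounded: "filterlim (\<lambda>x. (x - xpt ell N) * (sin (th N))^2) at_top at_top"
    using sin_N_nonzero by simp
  have "((\<lambda>x. - inverse z * complex_of_real (inverse ((x - xpt ell N) * (sin (th N))^2))) \<longlongrightarrow> 0) at_top"
    by (rule tendsto_mult_right_zero)
       (use tendsto_of_real[OF tendsto_inverse_0_at_top[OF unbounded], where 'a=complex] in simp)
  then show ?thesis
    unfolding truncated_tail_def toL_def lastTerm_def using PInf
    by (simp add: divide_inverse inverse_mult_distrib of_real_inverse mult.commute)
qed (use assms in simp)

end

theorem corollary4p2:
  fixes N :: nat and ell th :: "nat \<Rightarrow> real" and L :: ereal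
    and z :: complex and U :: "real \<Rightarrow> complex^2^2"
  assumes ell_pos: "\<And>k. k < N \<Longrightarrow> ell k > 0"
    and th0: "th 0 = pi / 2"
    and th_incr: "\<And>k. k < N \<Longrightarrow> th k < th (Suc k) \<and> th (Suc k) < th k + pi"
    and L_gt: "ereal (xpt ell N) < L"
    and thN: "\<not> inPiZ (th N)"
    and z_nonreal: "z \<notin> \<real>"
    and U_sol: "solves_U N ell th L z U"
  shows "((\<lambda>x. U x $ 1 $ 1 / U x $ 1 $ 2) \<longlongrightarrow> cfWT N ell th L z) (toL L)"
proof -
  interpret hamburger N th ell
    using ell_pos th_incr thN by unfold_locales (simp_all add: th0 inPiZ_iff_sin_eq_0)
  have Imz: "Im z \<noteq> 0" "z \<noteq> 0" using z_nonreal by (auto simp: complex_is_Real_iff)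
  define Q where "Q = shear_prod (cf_a z) (cf_b z) (kappa N th)"
  have cf: "snd (row_mult (lastTerm N ell th L z, 1) Q) \<noteq> 0 \<and>
      row_ratio (lastTerm N ell th L z, 1) Q = cfWT N ell th L z"
    unfolding Q_def cfWT_eq_contfrac
    by (rule shear_prod_row_ratio[OF Im_cf_a[OF Imz(1)] cf_b_nonzero_Im[OF Imz(1)] lastTerm_sign[OF L_gt Imz(1)]])
  have "((\<lambda>x. row_ratio (truncated_tail z x, 1) Q) \<longlongrightarrow> cfWT N ell th L z) (toL L)"
    using tendsto_row_ratio[OF tendsto_truncated_tail[OF L_gt Imz(2)] conjunct1[OF cf]]
    unfolding conjunct2[OF cf] .
  moreover have "eventually (\<lambda>x. row_ratio (truncated_tail z x, 1) Q = U x $ 1 $ 1 / U x $ 1 $ 2) (toL L)"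
    using eventually_toL_beyond_last[OF L_gt]
    by eventually_elim (auto simp: Q_def U_row_ratio[OF L_gt U_sol Imz(2)])
  ultimately show ?thesis by (rule Lim_transform_eventually)
qed

end
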